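(* Let $V$ and $\mathcal{N}_7^V$ be as follows: $V:\mathbb{C}^7\to\mathbb{C}^3\otimes\mathbb{C}^3$ is any isometry whose range is the orthogonal complement of $\operatorname{span}\{\ket{\phi_3^+},\ket{0}\otimes\ket{1}\}$ with $\ket{\phi_3^+}=\frac1{\sqrt3}\sum_{k=0}^2\ket{kk}$, and $\mathcal{N}_7^V(\rho)=\operatorname{Tr}_E(V\rho V^\dagger)$. Then for every $d\in\mathbb{N}$, $n\in\mathbb{N}$ and $M\in\mathcal{P}^{n\to n}(\mathcal{Q}_d)$ one has $\operatorname{Tr}M\le d$, so $\mathcal{F}_c(\mathcal{Q}_6)=6$; and $$\mathcal{F}_c^{\min}(\mathcal{N}_7^V)\ \ge\ \tfrac{20}{3}\ >\ 6=\mathcal{F}_c(\mathcal{Q}_6).$$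
   Context: $\mathcal{P}^{n\to m}(\mathcal{N}(\mathcal{Q}_{d_A}))$ is the set of $n\times m$ matrices $P_{ij}=\operatorname{Tr}[\Lambda_j\mathcal{N}(\rho_i)]$ with $\rho_i$ density matrices on the input space and $\{\Lambda_j\}$ a POVM on the output space; $\mathcal{P}^{n\to m}(\mathcal{Q}_d)$ is this set for the identity channel on $\mathcal{L}(\mathbb{C}^d)$. The classical transmission fidelity of a channel $\mathcal{N}$ is $\mathcal{F}_c(\mathcal{N})=\sup_{n\in\mathbb{N}}\sup_{P\in\mathcal{P}^{n\to n}(\mathcal{N}(\mathcal{Q}_{d_A}))}\operatorname{Tr}P$. For a channel with isometry $V:\mathbb{C}^{d_A}\to\mathbb{C}^{d_B}\otimes\mathbb{C}^{d_E}$, $\mathcal{P}^{n\to m}_{\min}(\mathcal{N},V)$ is the set of matrices $P_{ij}=\sum_{l,k}q(j\mid l,k)\operatorname{Tr}[(\Lambda^B_l\otimes\Lambda^E_k)V\rho_iV^\dagger]$ with independent finite-outcome POVMs $\{\Lambda^B_l\}$ on $\mathbb{C}^{d_B}$, $\{\Lambda^E_k\}$ on $\mathbb{C}^{d_E}$ and stochastic post-processing $q$; and $\mathcal{F}_c^{\min}(\mathcal{N})=\sup_n\sup_{P\in\mathcal{P}^{n\to n}_{\min}(\mathcal{N},V)}\operatorname{Tr}P$. *)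

theory Defs
  imports "HOL-Library.Extended_Real" "Jordan_Normal_Form.Schur_Decomposition"
begin

definition mtrace :: "'a::comm_ring_1 mat \<Rightarrow> 'a" where
  "mtrace A = (\<Sum>i<dim_row A. A $$ (i,i))"

definition cinner :: "complex vec \<Rightarrow> complex vec \<Rightarrow> complex" where
  "cinner u w = (\<Sum>i<dim_vec u. cnj (u $ i) * w $ i)"

definition psd_mat :: "nat \<Rightarrow> complex mat \<Rightarrow> bool" where
  "psd_mat d A \<longleftrightarrow> A \<in> carrier_mat d d \<and> mat_adjoint A = A \<and>
     (\<forall>v \<in> carrier_vec d. 0 \<le> Re (cinner v (A *\<^sub>v v)))"

definition density :: "nat \<Rightarrow> complex mat \<Rightarrow> bool" where
  "density d \<rho> \<longleftrightarrow> psd_mat d \<rho> \<and> mtrace \<rho> = 1"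

definition POVM :: "nat \<Rightarrow> nat \<Rightarrow> (nat \<Rightarrow> complex mat) \<Rightarrow> bool" where
  "POVM d m \<Lambda> \<longleftrightarrow> (\<forall>j<m. psd_mat d (\<Lambda> j)) \<and>
     (\<forall>a<d. \<forall>b<d. (\<Sum>j<m. \<Lambda> j $$ (a,b)) = (1\<^sub>m d) $$ (a,b))"

text \<open>Kronecker (tensor) products; basis index of |a b> is a * dim_B + b.\<close>
definition kron_mat :: "complex mat \<Rightarrow> complex mat \<Rightarrow> complex mat" where
  "kron_mat A B = mat (dim_row A * dim_row B) (dim_col A * dim_col B)
     (\<lambda>(i,j). A $$ (i div dim_row B, j div dim_col B) * B $$ (i mod dim_row B, j mod dim_col B))"

definition kron_vec :: "complex vec \<Rightarrow> complex vec \<Rightarrow> complex vec" where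
  "kron_vec u v = vec (dim_vec u * dim_vec v) (\<lambda>i. u $ (i div dim_vec v) * v $ (i mod dim_vec v))"

text \<open>P^{n->m}(N(Q_{dA})) for a map N from operators on C^dA to operators on C^dB.
  Entries Tr[Lambda_j N(rho_i)] are real; stored as a real n x m matrix.\<close>
definition P_set :: "nat \<Rightarrow> nat \<Rightarrow> (complex mat \<Rightarrow> complex mat) \<Rightarrow> nat \<Rightarrow> nat \<Rightarrow> real mat set" where
  "P_set dA dB N n m = {P \<in> carrier_mat n m. \<exists>\<rho> \<Lambda>.
      (\<forall>i<n. density dA (\<rho> i)) \<and> POVM dB m \<Lambda> \<and>
      (\<forall>i<n. \<forall>j<m. P $$ (i,j) = Re (mtrace (\<Lambda> j * N (\<rho> i))))}"

definition F_c :: "nat \<Rightarrow> nat \<Rightarrow> (complex mat \<Rightarrow> complex mat) \<Rightarrow> ereal" where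
  "F_c dA dB N = (SUP n. SUP P \<in> P_set dA dB N n n. ereal (mtrace P))"

definition P_min :: "complex mat \<Rightarrow> nat \<Rightarrow> nat \<Rightarrow> nat \<Rightarrow> nat \<Rightarrow> nat \<Rightarrow> real mat set" where
  "P_min V dA dB dE n m = {P \<in> carrier_mat n m. \<exists>\<rho> L \<Lambda>B K \<Lambda>E (q :: nat \<Rightarrow> nat \<Rightarrow> nat \<Rightarrow> real).
      (\<forall>i<n. density dA (\<rho> i)) \<and> POVM dB L \<Lambda>B \<and> POVM dE K \<Lambda>E \<and>
      (\<forall>l<L. \<forall>k<K. (\<forall>j<m. 0 \<le> q j l k) \<and> (\<Sum>j<m. q j l k) = 1) \<and>
      (\<forall>i<n. \<forall>j<m. P $$ (i,j) = (\<Sum>l<L. \<Sum>k<K. q j l k *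
          Re (mtrace (kron_mat (\<Lambda>B l) (\<Lambda>E k) * (V * \<rho> i * mat_adjoint V)))))}"

definition F_c_min :: "complex mat \<Rightarrow> nat \<Rightarrow> nat \<Rightarrow> nat \<Rightarrow> ereal" where
  "F_c_min V dA dB dE = (SUP n. SUP P \<in> P_min V dA dB dE n n. ereal (mtrace P))"

definition span2 :: "complex vec \<Rightarrow> complex vec \<Rightarrow> complex vec set" where
  "span2 u v = {a \<cdot>\<^sub>v u + b \<cdot>\<^sub>v v | a b. True}"

definition orth_compl :: "nat \<Rightarrow> complex vec set \<Rightarrow> complex vec set" where
  "orth_compl n S = {w \<in> carrier_vec n. \<forall>u \<in> S. cinner u w = 0}"

definition ket3 :: "nat \<Rightarrow> complex vec" where "ket3 k = unit_vec 3 k"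

definition phi3_plus :: "complex vec" where
  "phi3_plus = (1 / complex_of_real (sqrt 3)) \<cdot>\<^sub>v
     (kron_vec (ket3 0) (ket3 0) + kron_vec (ket3 1) (ket3 1) + kron_vec (ket3 2) (ket3 2))"

definition ket01 :: "complex vec" where "ket01 = kron_vec (ket3 0) (ket3 1)"

end

theory Submission
  imports Defs
begin

(* Upper bound: for positive semidefinite A and B, |A_ik|^2 <= A_ii A_kk and AM-GM give
   Re tr(AB) <= tr A tr B.  Hence Re tr(Lambda_i rho_i) <= tr Lambda_i for a density rho_i,
   and summing over a POVM on C^d bounds tr M by tr 1 = d; the computational basis attains d.

   Lower bound: the range of V contains |02>, |10>, |12>, |20>, |21> and, inside
   span{|00>, |11>, |22>} and orthogonal to phi3_plus, the unit vectors
   (|00> + |11> + |22> - 3 |kk>) / sqrt 6, which have weight 2/3 on |kk>.  Measuring B and E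
   in the computational basis and decoding the outcome |kl> as the message that was sent
   through it gives fidelity 5 + 3 * 2/3 = 7 >= 20/3 > 6. *)

lemma dim_mat_adjoint [simp]:
  "dim_row (mat_adjoint A) = dim_col A" "dim_col (mat_adjoint A) = dim_row A"
  unfolding mat_adjoint_def by (simp_all add: mat_of_rows_def)

lemma index_mat_adjoint [simp]:
  "i < dim_col A \<Longrightarrow> j < dim_row A \<Longrightarrow> mat_adjoint A $$ (i, j) = cnj (A $$ (j, i))"
  unfolding mat_adjoint_def by (simp add: mat_of_rows_def)

lemma index_mult_mat_sum:
  "i < dim_row A \<Longrightarrow> j < dim_col B \<Longrightarrow> dim_col A = n \<Longrightarrow> dim_row B = n \<Longrightarrow>
   (A * B) $$ (i, j) = (\<Sum>k<n. A $$ (i, k) * B $$ (k, j))"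
  by (auto simp: scalar_prod_def atLeast0LessThan intro!: sum.cong)

lemma index_mult_mat_vec_sum:
  "i < dim_row A \<Longrightarrow> dim_col A = n \<Longrightarrow> dim_vec v = n \<Longrightarrow>
   (A *\<^sub>v v) $ i = (\<Sum>k<n. A $$ (i, k) * v $ k)"
  by (auto simp: scalar_prod_def atLeast0LessThan intro!: sum.cong)

lemma mtrace_mult_sum:
  assumes "A \<in> carrier_mat d d" "B \<in> carrier_mat d d"
  shows "mtrace (A * B) = (\<Sum>i<d. \<Sum>k<d. A $$ (i, k) * B $$ (k, i))"
  unfolding mtrace_def using assms
  by (intro sum.cong refl) (auto simp: index_mult_mat_sum[where n = d] simp del: index_mult_mat(1))

lemma Re_mtrace: "A \<in> carrier_mat d d \<Longrightarrow> Re (mtrace A) = (\<Sum>i<d. Re (A $$ (i, i)))"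
  unfolding mtrace_def by (simp add: Re_sum)

lemma cinner_smult_right: "dim_vec w = dim_vec u \<Longrightarrow> cinner u (c \<cdot>\<^sub>v w) = c * cinner u w"
  unfolding cinner_def by (auto simp: sum_distrib_left algebra_simps)

lemma cinner_commute: "dim_vec w = dim_vec u \<Longrightarrow> cinner w u = cnj (cinner u w)"
  unfolding cinner_def by (auto simp: mult.commute)

lemma cinner_smult_left: "cinner (c \<cdot>\<^sub>v u) v = cnj c * cinner u v"
  unfolding cinner_def by (simp add: sum_distrib_left mult.assoc)

lemma cinner_add_left:
  "dim_vec w = dim_vec u \<Longrightarrow> dim_vec v = dim_vec u \<Longrightarrow> cinner (u + w) v = cinner u v + cinner w v"
  unfolding cinner_def by (simp add: sum.distrib algebra_simps)

lemma cinner_unit_vec: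
  assumes "i < d" "dim_vec u = d"
  shows "cinner (unit_vec d i) u = u $ i"
proof -
  have "cinner (unit_vec d i) u = (\<Sum>k<d. if k = i then u $ i else 0)"
    unfolding cinner_def using assms by (intro sum.cong) auto
  then show ?thesis using assms by simp
qed

definition ketbra :: "complex vec \<Rightarrow> complex mat" where
  "ketbra u = mat (dim_vec u) (dim_vec u) (\<lambda>(i, j). u $ i * cnj (u $ j))"

lemma dim_ketbra [simp]: "dim_row (ketbra u) = dim_vec u" "dim_col (ketbra u) = dim_vec u"
  unfolding ketbra_def by auto

lemma index_ketbra [simp]:
  "i < dim_vec u \<Longrightarrow> j < dim_vec u \<Longrightarrow> ketbra u $$ (i, j) = u $ i * cnj (u $ j)"
  unfolding ketbra_def by auto

lemma ketbra_carrier_mat: "u \<in> carrier_vec d \<Longrightarrow> ketbra u \<in> carrier_mat d d"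
  by (auto dest: carrier_vecD)

lemma ketbra_mult_vec: "dim_vec v = dim_vec u \<Longrightarrow> ketbra u *\<^sub>v v = cinner u v \<cdot>\<^sub>v u"
  by (intro eq_vecI)
    (auto simp: index_mult_mat_vec_sum[where n = "dim_vec u"] cinner_def sum_distrib_left sum_distrib_right mult_ac
      simp del: index_mult_mat_vec)

lemma psd_ketbra:
  assumes "u \<in> carrier_vec d"
  shows "psd_mat d (ketbra u)"
  unfolding psd_mat_def
proof (intro conjI ballI)
  show "ketbra u \<in> carrier_mat d d" using assms by (rule ketbra_carrier_mat)
  show "mat_adjoint (ketbra u) = ketbra u"
    using assms by (intro eq_matI) auto
  fix v :: "complex vec" assume "v \<in> carrier_vec d"
  then have "cinner v (ketbra u *\<^sub>v v) = cinner u v * cnj (cinner u v)"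
    using assms cinner_commute[of v u] by (simp add: ketbra_mult_vec cinner_smult_right mult.commute)
  then show "0 \<le> Re (cinner v (ketbra u *\<^sub>v v))" by (simp add: complex_mult_cnj)
qed

lemma mtrace_ketbra: "mtrace (ketbra u) = cinner u u"
  unfolding mtrace_def cinner_def by (auto simp: mult.commute)

lemma density_ketbra: "u \<in> carrier_vec d \<Longrightarrow> cinner u u = 1 \<Longrightarrow> density d (ketbra u)"
  unfolding density_def by (simp add: psd_ketbra mtrace_ketbra)

lemma index_ketbra_unit_vec:
  "a < d \<Longrightarrow> b < d \<Longrightarrow> ketbra (unit_vec d j) $$ (a, b) = (if a = j \<and> b = j then 1 else 0)"
  by (simp add: unit_vec_def)

lemma POVM_unit_vec: "POVM d d (\<lambda>j. ketbra (unit_vec d j))"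
  unfolding POVM_def
proof (intro conjI allI impI)
  show "psd_mat d (ketbra (unit_vec d j))" for j by (simp add: psd_ketbra)
  fix a b assume "a < d" "b < d"
  then show "(\<Sum>j<d. ketbra (unit_vec d j) $$ (a, b)) = 1\<^sub>m d $$ (a, b)"
    by (simp add: index_ketbra_unit_vec del: index_ketbra)
qed

lemma mtrace_ketbra_mult:
  assumes "dim_vec w = dim_vec u"
  shows "mtrace (ketbra u * ketbra w) = cnj (cinner u w) * cinner u w"
proof -
  have "mtrace (ketbra u * ketbra w) = (\<Sum>i<dim_vec u. \<Sum>k<dim_vec u. u $ i * cnj (u $ k) * (w $ k * cnj (w $ i)))"
    using assms by (simp add: mtrace_mult_sum[where d = "dim_vec u"] carrier_matI)
  also have "\<dots> = (\<Sum>i<dim_vec u. u $ i * cnj (w $ i)) * (\<Sum>k<dim_vec u. cnj (u $ k) * w $ k)"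
    by (simp add: sum_product algebra_simps)
  finally show ?thesis unfolding cinner_def by (simp add: mult.commute)
qed

lemma mtrace_ketbra_unit_vec_mult:
  "i < d \<Longrightarrow> dim_vec u = d \<Longrightarrow> Re (mtrace (ketbra (unit_vec d i) * ketbra u)) = (cmod (u $ i))\<^sup>2"
  by (simp add: mtrace_ketbra_mult cinner_unit_vec complex_mult_cnj cmod_power2 mult.commute)

lemma cinner_mult_mat_vec_left:
  assumes "A \<in> carrier_mat m n" "x \<in> carrier_vec n" "y \<in> carrier_vec m"
  shows "cinner (A *\<^sub>v x) y = cinner x (mat_adjoint A *\<^sub>v y)"
proof -
  have "cinner (A *\<^sub>v x) y = (\<Sum>i<m. \<Sum>k<n. cnj (A $$ (i, k)) * cnj (x $ k) * y $ i)"
    unfolding cinner_def using assms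
    by (intro sum.cong) (auto simp: index_mult_mat_vec_sum[where n = n] cnj_sum sum_distrib_right
        simp del: index_mult_mat_vec)
  also have "\<dots> = (\<Sum>k<n. \<Sum>i<m. cnj (A $$ (i, k)) * cnj (x $ k) * y $ i)"
    by (rule sum.swap)
  also have "\<dots> = cinner x (mat_adjoint A *\<^sub>v y)"
    unfolding cinner_def using assms
    by (intro sum.cong) (auto simp: index_mult_mat_vec_sum[where n = m] sum_distrib_left mult_ac
        simp del: index_mult_mat_vec)
  finally show ?thesis .
qed

lemma cinner_isometry:
  assumes "V \<in> carrier_mat m n" "mat_adjoint V * V = 1\<^sub>m n" "x \<in> carrier_vec n"
  shows "cinner (V *\<^sub>v x) (V *\<^sub>v x) = cinner x x"
proof -
  have adj: "mat_adjoint V \<in> carrier_mat n m" using assms(1) by (auto intro: carrier_matI)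
  have "cinner (V *\<^sub>v x) (V *\<^sub>v x) = cinner x (mat_adjoint V *\<^sub>v (V *\<^sub>v x))"
    by (rule cinner_mult_mat_vec_left) (use assms in auto)
  also have "mat_adjoint V *\<^sub>v (V *\<^sub>v x) = (mat_adjoint V * V) *\<^sub>v x"
    by (rule assoc_mult_mat_vec[symmetric]) (use adj assms in auto)
  finally show ?thesis using assms by simp
qed

lemma isometry_conj_ketbra:
  assumes V: "V \<in> carrier_mat m n" and x: "x \<in> carrier_vec n"
  shows "V * ketbra x * mat_adjoint V = ketbra (V *\<^sub>v x)"
proof (rule eq_matI)
  fix i j assume "i < dim_row (ketbra (V *\<^sub>v x))" "j < dim_col (ketbra (V *\<^sub>v x))"
  then have i: "i < m" and j: "j < m" using V by auto
  have left: "(V * ketbra x) $$ (i, b) = (V *\<^sub>v x) $ i * cnj (x $ b)" if "b < n" for b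
    using V x i that
    by (simp add: index_mult_mat_sum[where n = n] index_mult_mat_vec_sum[where n = n]
        sum_distrib_right mult.assoc del: index_mult_mat index_mult_mat_vec)
  have "(V * ketbra x * mat_adjoint V) $$ (i, j) = (\<Sum>b<n. (V * ketbra x) $$ (i, b) * mat_adjoint V $$ (b, j))"
    by (rule index_mult_mat_sum) (use V x i j in auto)
  also have "\<dots> = (\<Sum>b<n. (V *\<^sub>v x) $ i * cnj (x $ b) * cnj (V $$ (j, b)))"
    using V j by (intro sum.cong refl) (simp add: left)
  also have "\<dots> = (V *\<^sub>v x) $ i * cnj ((V *\<^sub>v x) $ j)"
    using V x j by (simp add: index_mult_mat_vec_sum[where n = n] cnj_sum sum_distrib_left mult_ac
        del: index_mult_mat_vec)
  finally show "(V * ketbra x * mat_adjoint V) $$ (i, j) = ketbra (V *\<^sub>v x) $$ (i, j)"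
    using V i j by simp
qed (use V in auto)

lemma mult_add_eq_iff_div_mod: "k < b \<Longrightarrow> i = l * b + k \<longleftrightarrow> i div b = l \<and> i mod b = k"
  for i l k b :: nat
  by (auto simp: div_mult_mod_eq)

lemma mult_add_less_mult: "l < a \<Longrightarrow> k < b \<Longrightarrow> l * b + k < a * b" for l k a b :: nat
proof -
  assume "l < a" "k < b"
  then have "l * b + k < (l + 1) * b" by simp
  also have "\<dots> \<le> a * b" using \<open>l < a\<close> by (intro mult_right_mono) auto
  finally show ?thesis .
qed

lemma kron_vec_unit_vec:
  assumes "l < a" "k < b"
  shows "kron_vec (unit_vec a l) (unit_vec b k) = unit_vec (a * b) (l * b + k)"
proof (rule eq_vecI)
  fix i assume i: "i < dim_vec (unit_vec (a * b) (l * b + k))"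
  then have "i div b < a" "i mod b < b" using assms by (auto simp: less_mult_imp_div_less)
  then show "kron_vec (unit_vec a l) (unit_vec b k) $ i = unit_vec (a * b) (l * b + k) $ i"
    using i assms unfolding kron_vec_def by (simp add: unit_vec_def mult_add_eq_iff_div_mod[OF assms(2)])
qed (simp add: kron_vec_def)

lemma kron_mat_ketbra: "kron_mat (ketbra u) (ketbra w) = ketbra (kron_vec u w)"
proof (rule eq_matI)
  fix i j assume "i < dim_row (ketbra (kron_vec u w))" "j < dim_col (ketbra (kron_vec u w))"
  then have "i < dim_vec u * dim_vec w" "j < dim_vec u * dim_vec w" by (simp_all add: kron_vec_def)
  moreover have "i div dim_vec w < dim_vec u" "i mod dim_vec w < dim_vec w"
    if "i < dim_vec u * dim_vec w" for i
    using that by (auto simp: less_mult_imp_div_less intro!: mod_less_divisor gr0I)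
  ultimately show "kron_mat (ketbra u) (ketbra w) $$ (i, j) = ketbra (kron_vec u w) $$ (i, j)"
    by (simp add: kron_mat_def kron_vec_def mult_ac)
qed (simp_all add: kron_mat_def kron_vec_def)

section \<open>Positive semidefinite matrices\<close>

lemma psd_mat_hermitian: "psd_mat d A \<Longrightarrow> i < d \<Longrightarrow> j < d \<Longrightarrow> A $$ (j, i) = cnj (A $$ (i, j))"
  unfolding psd_mat_def by (metis carrier_matD index_mat_adjoint)

lemma psd_mat_diag_real: "psd_mat d A \<Longrightarrow> i < d \<Longrightarrow> A $$ (i, i) = of_real (Re (A $$ (i, i)))"
  using psd_mat_hermitian[of d A i i] by (simp add: complex_eq_iff)

lemma quadratic_form_two_unit_vecs:
  fixes s w :: complex
  assumes A: "A \<in> carrier_mat d d" and ij: "i < d" "j < d"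
  defines "v \<equiv> s \<cdot>\<^sub>v unit_vec d i + w \<cdot>\<^sub>v unit_vec d j"
  shows "cinner v (A *\<^sub>v v)
    = cnj s * (A $$ (i, i) * s + A $$ (i, j) * w) + cnj w * (A $$ (j, i) * s + A $$ (j, j) * w)"
proof -
  have "A *\<^sub>v v = s \<cdot>\<^sub>v (A *\<^sub>v unit_vec d i) + w \<cdot>\<^sub>v (A *\<^sub>v unit_vec d j)"
    unfolding v_def using A by (simp add: mult_add_distrib_mat_vec[of A d d] mult_mat_vec)
  moreover have "(A *\<^sub>v unit_vec d i) $ k = A $$ (k, i)" "(A *\<^sub>v unit_vec d j) $ k = A $$ (k, j)"
    if "k < d" for k
    using A ij that by auto
  ultimately show ?thesis
    unfolding v_def using A ij by (simp add: cinner_add_left cinner_smult_left cinner_unit_vec mult.commute)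
qed

lemma psd_mat_diag_nonneg:
  assumes "psd_mat d A" "i < d"
  shows "0 \<le> Re (A $$ (i, i))"
proof -
  have "0 \<le> Re (cinner (unit_vec d i) (A *\<^sub>v unit_vec d i))"
    using assms unfolding psd_mat_def by simp
  moreover have "A \<in> carrier_mat d d" using assms(1) unfolding psd_mat_def by simp
  ultimately show ?thesis using assms(2) by (simp add: cinner_unit_vec)
qed

lemma nonneg_quadratic_bound:
  fixes p q N :: real
  assumes nonneg: "\<And>s. 0 \<le> p * s\<^sup>2 - 2 * N * s + N * q" and "0 \<le> p" "0 \<le> q"
  shows "N \<le> p * q"
proof -
  consider "N \<le> 0" | "0 < N" "p = 0" | "0 < N" "0 < p" using assms by linarith
  then show ?thesis
  proof cases
    case 1
    then show ?thesis using mult_nonneg_nonneg[OF assms(2,3)] by linarith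
  next
    case 2
    have "0 \<le> p * (q / 2 + 1)\<^sup>2 - 2 * N * (q / 2 + 1) + N * q" by (rule nonneg)
    with 2 show ?thesis by (simp add: algebra_simps)
  next
    case 3
    have "0 \<le> p * (N / p)\<^sup>2 - 2 * N * (N / p) + N * q" by (rule nonneg)
    then have "0 \<le> N * (p * q - N)" using 3 by (simp add: field_simps power2_eq_square)
    with 3 show ?thesis by (simp add: zero_le_mult_iff)
  qed
qed

lemma psd_mat_entry_bound:
  assumes P: "psd_mat d A" and ij: "i < d" "j < d"
  shows "(cmod (A $$ (i, j)))\<^sup>2 \<le> Re (A $$ (i, i)) * Re (A $$ (j, j))"
proof (rule nonneg_quadratic_bound)
  have A: "A \<in> carrier_mat d d" using P unfolding psd_mat_def by simp
  fix s :: real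
  let ?c = "A $$ (i, j)" and ?p = "Re (A $$ (i, i))" and ?q = "Re (A $$ (j, j))"
  let ?v = "of_real s \<cdot>\<^sub>v unit_vec d i + (- cnj ?c) \<cdot>\<^sub>v unit_vec d j"
  have "0 \<le> Re (cinner ?v (A *\<^sub>v ?v))" using P unfolding psd_mat_def by simp
  also have "cinner ?v (A *\<^sub>v ?v) = of_real s * (of_real ?p * of_real s - ?c * cnj ?c)
      - ?c * (cnj ?c * of_real s - of_real ?q * cnj ?c)"
    using quadratic_form_two_unit_vecs[OF A ij, of "of_real s" "- cnj ?c"]
      psd_mat_diag_real[OF P ij(1)] psd_mat_diag_real[OF P ij(2)] psd_mat_hermitian[OF P ij]
    by (simp add: algebra_simps)
  also have "Re \<dots> = ?p * s\<^sup>2 - 2 * (cmod ?c)\<^sup>2 * s + (cmod ?c)\<^sup>2 * ?q"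
    unfolding cmod_power2 by (simp add: power2_eq_square algebra_simps)
  finally show "0 \<le> ?p * s\<^sup>2 - 2 * (cmod ?c)\<^sup>2 * s + (cmod ?c)\<^sup>2 * ?q" .
qed (use psd_mat_diag_nonneg[OF P] ij in auto)

lemma mult_le_half_cross_sum:
  fixes x y a b c e :: real
  assumes "0 \<le> x" "0 \<le> y" "0 \<le> a" "0 \<le> b" "0 \<le> c" "0 \<le> e"
    and "x\<^sup>2 \<le> a * b" "y\<^sup>2 \<le> c * e"
  shows "x * y \<le> (a * c + b * e) / 2"
proof (rule power2_le_imp_le)
  have "(x * y)\<^sup>2 \<le> (a * b) * (c * e)"
    unfolding power_mult_distrib using assms by (intro mult_mono) auto
  also have "\<dots> = (a * c) * (b * e)" by (simp add: mult_ac)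
  also have "\<dots> \<le> ((a * c + b * e) / 2)\<^sup>2"
    using sum_squares_ge_zero[of "(a * c - b * e) / 2" 0] by (simp add: power2_eq_square field_simps)
  finally show "(x * y)\<^sup>2 \<le> ((a * c + b * e) / 2)\<^sup>2" .
qed (use assms in simp)

lemma Re_mtrace_mult_psd_le:
  assumes PA: "psd_mat d A" and PB: "psd_mat d B"
  shows "Re (mtrace (A * B)) \<le> Re (mtrace A) * Re (mtrace B)"
proof -
  have A: "A \<in> carrier_mat d d" and B: "B \<in> carrier_mat d d" using PA PB unfolding psd_mat_def by auto
  let ?p = "\<lambda>i. Re (A $$ (i, i))" and ?q = "\<lambda>i. Re (B $$ (i, i))"
  have "Re (mtrace (A * B)) = (\<Sum>i<d. \<Sum>k<d. Re (A $$ (i, k) * B $$ (k, i)))"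
    by (simp add: mtrace_mult_sum[OF A B] Re_sum)
  also have "\<dots> \<le> (\<Sum>i<d. \<Sum>k<d. (?p i * ?q k + ?p k * ?q i) / 2)"
  proof (intro sum_mono)
    fix i k assume "i \<in> {..<d}" "k \<in> {..<d}"
    then have "cmod (A $$ (i, k)) * cmod (B $$ (k, i)) \<le> (?p i * ?q k + ?p k * ?q i) / 2"
      using psd_mat_entry_bound[OF PA, of i k] psd_mat_entry_bound[OF PB, of k i]
        psd_mat_diag_nonneg[OF PA] psd_mat_diag_nonneg[OF PB]
      by (intro mult_le_half_cross_sum) auto
    then show "Re (A $$ (i, k) * B $$ (k, i)) \<le> (?p i * ?q k + ?p k * ?q i) / 2"
      using complex_Re_le_cmod[of "A $$ (i, k) * B $$ (k, i)"] by (simp add: norm_mult)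
  qed
  also have "\<dots> = ((\<Sum>i<d. \<Sum>k<d. ?p i * ?q k) + (\<Sum>k<d. \<Sum>i<d. ?p i * ?q k)) / 2"
    by (simp add: sum.distrib sum_divide_distrib add_divide_distrib)
  also have "\<dots> = (\<Sum>i<d. ?p i) * (\<Sum>k<d. ?q k)"
    unfolding sum.swap[of "\<lambda>k i. ?p i * ?q k"] by (simp add: sum_product)
  also have "\<dots> = Re (mtrace A) * Re (mtrace B)"
    by (simp add: Re_mtrace[OF A] Re_mtrace[OF B])
  finally show ?thesis .
qed

lemma mtrace_le_of_mem_P_set_id:
  assumes "M \<in> P_set d d id n n"
  shows "mtrace M \<le> real d"
proof -
  from assms obtain \<rho> \<Lambda> where M: "M \<in> carrier_mat n n" and \<rho>: "\<forall>i<n. density d (\<rho> i)"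
    and \<Lambda>: "POVM d n \<Lambda>" and M_eq: "\<forall>i<n. \<forall>j<n. M $$ (i, j) = Re (mtrace (\<Lambda> j * \<rho> i))"
    unfolding P_set_def by auto
  have psd_\<Lambda>: "psd_mat d (\<Lambda> i)" if "i < n" for i using \<Lambda> that unfolding POVM_def by auto
  have "mtrace M = (\<Sum>i<n. M $$ (i, i))" unfolding mtrace_def using M by simp
  also have "\<dots> = (\<Sum>i<n. Re (mtrace (\<Lambda> i * \<rho> i)))" using M_eq by simp
  also have "\<dots> \<le> (\<Sum>i<n. Re (mtrace (\<Lambda> i)) * Re (mtrace (\<rho> i)))"
    using \<rho> psd_\<Lambda> unfolding density_def by (intro sum_mono Re_mtrace_mult_psd_le) auto
  also have "\<dots> = (\<Sum>i<n. Re (mtrace (\<Lambda> i)))"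
    using \<rho> unfolding density_def by simp
  also have "\<dots> = (\<Sum>i<n. \<Sum>a<d. Re (\<Lambda> i $$ (a, a)))"
    using psd_\<Lambda> unfolding psd_mat_def by (intro sum.cong refl) (simp add: Re_mtrace)
  also have "\<dots> = (\<Sum>a<d. Re (\<Sum>i<n. \<Lambda> i $$ (a, a)))"
    by (simp add: Re_sum sum.swap[of _ "{..<n}"])
  also have "\<dots> = real d"
    using \<Lambda> unfolding POVM_def by simp
  finally show ?thesis .
qed

section \<open>Classical transmission fidelity\<close>

lemma F_c_le:
  "(\<And>n P. P \<in> P_set dA dB N n n \<Longrightarrow> mtrace P \<le> c) \<Longrightarrow> F_c dA dB N \<le> ereal c"
  unfolding F_c_def by (intro SUP_least) simp

lemma mtrace_le_F_c: "P \<in> P_set dA dB N n n \<Longrightarrow> ereal (mtrace P) \<le> F_c dA dB N"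
  unfolding F_c_def by (rule SUP_upper2[of n]) (auto intro: SUP_upper)

lemma mtrace_le_F_c_min: "P \<in> P_min V dA dB dE n n \<Longrightarrow> ereal (mtrace P) \<le> F_c_min V dA dB dE"
  unfolding F_c_min_def by (rule SUP_upper2[of n]) (auto intro: SUP_upper)

lemma F_c_id: "F_c d d id = ereal (real d)"
proof (rule antisym)
  show "F_c d d id \<le> ereal (real d)" by (rule F_c_le) (rule mtrace_le_of_mem_P_set_id)
  define P where "P = mat d d (\<lambda>(i, j). Re (mtrace (ketbra (unit_vec d j) * ketbra (unit_vec d i))))"
  have "P \<in> P_set d d id d d"
    unfolding P_set_def
  proof (intro CollectI conjI exI)
    show "\<forall>i<d. density d (ketbra (unit_vec d i))" by (simp add: density_ketbra cinner_unit_vec)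
    show "POVM d d (\<lambda>j. ketbra (unit_vec d j))" by (rule POVM_unit_vec)
  qed (simp_all add: P_def)
  moreover have "mtrace P = real d"
  proof -
    have "mtrace P = (\<Sum>i<d. Re (mtrace (ketbra (unit_vec d i) * ketbra (unit_vec d i))))"
      unfolding P_def by (simp add: mtrace_def[of "mat _ _ _"])
    also have "\<dots> = (\<Sum>i<d. 1)" by (intro sum.cong refl) (simp add: mtrace_ketbra_unit_vec_mult)
    finally show ?thesis by simp
  qed
  ultimately show "ereal (real d) \<le> F_c d d id" using mtrace_le_F_c by metis
qed

lemma sum_product_basis_delta:
  fixes f :: "nat \<Rightarrow> nat \<Rightarrow> 'a::comm_monoid_add"
  assumes "i < dB * dE"
  shows "(\<Sum>l<dB. \<Sum>k<dE. if i = l * dE + k then f l k else 0) = f (i div dE) (i mod dE)"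
proof -
  have "i div dE < dB" "i mod dE < dE" using assms by (auto simp: less_mult_imp_div_less intro!: mod_less_divisor gr0I)
  moreover have "(\<Sum>k<dE. if i = l * dE + k then f l k else 0)
      = (if l = i div dE then f l (i mod dE) else 0)" for l
    using \<open>i mod dE < dE\<close>
    by (simp add: mult_add_eq_iff_div_mod[where b = dE] conj_commute cong: conj_cong)
  ultimately show ?thesis by simp
qed

lemma sum_product_basis_le_F_c_min:
  assumes V: "V \<in> carrier_mat (dB * dE) dA" and iso: "mat_adjoint V * V = 1\<^sub>m dA"
    and range: "\<And>m. m < dB * dE \<Longrightarrow> \<psi> m \<in> {V *\<^sub>v x | x. x \<in> carrier_vec dA}"
    and unit: "\<And>m. m < dB * dE \<Longrightarrow> cinner (\<psi> m) (\<psi> m) = 1"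
  shows "ereal (\<Sum>m<dB * dE. (cmod (\<psi> m $ m))\<^sup>2) \<le> F_c_min V dA dB dE"
proof -
  let ?n = "dB * dE"
  obtain x where x: "\<And>m. m < ?n \<Longrightarrow> x m \<in> carrier_vec dA \<and> V *\<^sub>v x m = \<psi> m"
    using range by (simp only: mem_Collect_eq) metis
  define \<rho> where "\<rho> m = ketbra (x m)" for m
  define \<Lambda>B where "\<Lambda>B l = ketbra (unit_vec dB l)" for l
  define \<Lambda>E where "\<Lambda>E k = ketbra (unit_vec dE k)" for k
  define q where "q j l k = (if j = l * dE + k then 1 else 0 :: real)" for j l k
  define P where "P = mat ?n ?n (\<lambda>(i, j). \<Sum>l<dB. \<Sum>k<dE.
    q j l k * Re (mtrace (kron_mat (\<Lambda>B l) (\<Lambda>E k) * (V * \<rho> i * mat_adjoint V))))"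
  have outcome: "Re (mtrace (kron_mat (\<Lambda>B l) (\<Lambda>E k) * (V * \<rho> i * mat_adjoint V)))
      = (cmod (\<psi> i $ (l * dE + k)))\<^sup>2" if "i < ?n" "l < dB" "k < dE" for i l k
  proof -
    have "kron_mat (\<Lambda>B l) (\<Lambda>E k) = ketbra (unit_vec ?n (l * dE + k))"
      unfolding \<Lambda>B_def \<Lambda>E_def using that by (simp add: kron_mat_ketbra kron_vec_unit_vec)
    moreover have "V * \<rho> i * mat_adjoint V = ketbra (\<psi> i)"
      unfolding \<rho>_def using x[OF that(1)] isometry_conj_ketbra[OF V] by simp
    moreover have "dim_vec (\<psi> i) = ?n" using x[OF that(1)] V by (metis carrier_matD(1) dim_mult_mat_vec)
    ultimately show ?thesis
      using that mult_add_less_mult by (simp add: mtrace_ketbra_unit_vec_mult)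
  qed
  have "P \<in> P_min V dA dB dE ?n ?n"
    unfolding P_min_def
  proof (intro CollectI conjI exI)
    show "\<forall>m<?n. density dA (\<rho> m)"
    proof (intro allI impI)
      fix m assume m: "m < ?n"
      have "cinner (x m) (x m) = cinner (\<psi> m) (\<psi> m)" using x[OF m] cinner_isometry[OF V iso] by metis
      then show "density dA (\<rho> m)" unfolding \<rho>_def using x[OF m] unit[OF m] by (simp add: density_ketbra)
    qed
    show "POVM dB dB \<Lambda>B" "POVM dE dE \<Lambda>E" unfolding \<Lambda>B_def \<Lambda>E_def by (rule POVM_unit_vec)+
    show "\<forall>l<dB. \<forall>k<dE. (\<forall>j<?n. 0 \<le> q j l k) \<and> (\<Sum>j<?n. q j l k) = 1"
      unfolding q_def using mult_add_less_mult by simp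
  qed (simp_all add: P_def)
  moreover have "mtrace P = (\<Sum>m<?n. (cmod (\<psi> m $ m))\<^sup>2)"
  proof -
    have weighted: "q i l k * Re (mtrace (kron_mat (\<Lambda>B l) (\<Lambda>E k) * (V * \<rho> i * mat_adjoint V)))
        = (if i = l * dE + k then (cmod (\<psi> i $ (l * dE + k)))\<^sup>2 else 0)"
      if "i < ?n" "l < dB" "k < dE" for i l k
      using outcome[OF that] by (simp add: q_def)
    have "mtrace P = (\<Sum>i<?n. \<Sum>l<dB. \<Sum>k<dE. if i = l * dE + k then (cmod (\<psi> i $ (l * dE + k)))\<^sup>2 else 0)"
      unfolding mtrace_def[of P] by (simp add: P_def weighted)
    also have "\<dots> = (\<Sum>i<?n. (cmod (\<psi> i $ i))\<^sup>2)"
      by (intro sum.cong refl) (simp add: sum_product_basis_delta)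
    finally show ?thesis .
  qed
  ultimately show ?thesis using mtrace_le_F_c_min by metis
qed

section \<open>The channel N_7^V\<close>

lemma ket01_eq: "ket01 = unit_vec 9 1"
  by (simp add: ket01_def ket3_def kron_vec_unit_vec)

lemma phi3_plus_eq:
  "phi3_plus = (1 / complex_of_real (sqrt 3)) \<cdot>\<^sub>v (unit_vec 9 0 + unit_vec 9 4 + unit_vec 9 8)"
  by (simp add: phi3_plus_def ket3_def kron_vec_unit_vec)

lemma mem_orth_compl_span2:
  assumes "v \<in> carrier_vec n" "dim_vec u = n" "dim_vec w = n" "cinner u v = 0" "cinner w v = 0"
  shows "v \<in> orth_compl n (span2 u w)"
  unfolding orth_compl_def span2_def using assms by (auto simp: cinner_add_left cinner_smult_left)

lemma mem_orth_compl_phi3_plus_ket01: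
  assumes "v \<in> carrier_vec 9" "v $ 0 + v $ 4 + v $ 8 = 0" "v $ 1 = 0"
  shows "v \<in> orth_compl 9 (span2 phi3_plus ket01)"
proof (rule mem_orth_compl_span2)
  show "cinner phi3_plus v = 0"
    using assms unfolding phi3_plus_eq by (simp add: cinner_smult_left cinner_add_left cinner_unit_vec)
  show "cinner ket01 v = 0"
    using assms unfolding ket01_eq by (simp add: cinner_unit_vec)
qed (use assms in \<open>simp_all add: phi3_plus_eq ket01_eq\<close>)

(* Index 3 k + l stands for |kl>, so the diagonal states |kk> have the indices divisible by 4.
   An off-diagonal outcome |kl> is its own code state, except that |01> lies outside the range
   of V and message 1 is sent as |02>; the diagonal outcome |kk> gets
   (|00> + |11> + |22> - 3 |kk>) / sqrt 6, orthogonal to phi3_plus with weight 2/3 on |kk>. *)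
definition N7_code :: "nat \<Rightarrow> complex vec" where
  "N7_code m = (if m mod 4 = 0
     then vec 9 (\<lambda>i. if i mod 4 = 0 then (if i = m then - 2 else 1) / complex_of_real (sqrt 6) else 0)
     else unit_vec 9 (if m = 1 then 2 else m))"

lemma N7_code_carrier: "N7_code m \<in> carrier_vec 9"
  by (simp add: N7_code_def)

lemma less_9_iff: "(m::nat) < 9 \<longleftrightarrow> m \<in> {0, 1, 2, 3, 4, 5, 6, 7, 8}"
  by auto

lemma N7_code_mem_range: "m < 9 \<Longrightarrow> N7_code m \<in> orth_compl 9 (span2 phi3_plus ket01)"
  unfolding less_9_iff
  by (intro mem_orth_compl_phi3_plus_ket01 N7_code_carrier) (auto simp: N7_code_def add_divide_distrib[symmetric])

lemma N7_code_norm: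
  assumes "m < 9"
  shows "cinner (N7_code m) (N7_code m) = 1"
proof -
  have sqrt_6: "complex_of_real (sqrt 6) * complex_of_real (sqrt 6) = 6"
    by (simp flip: of_real_mult)
  show ?thesis using assms unfolding less_9_iff
    by (auto simp: N7_code_def cinner_unit_vec cinner_def lessThan_nat_numeral add_divide_distrib[symmetric] sqrt_6)
qed

lemma N7_code_fidelity: "(\<Sum>m<9. (cmod (N7_code m $ m))\<^sup>2) = 7"
  by (simp add: N7_code_def lessThan_nat_numeral norm_divide power_divide)

theorem proposition2:
  fixes V :: "complex mat"
  assumes "V \<in> carrier_mat 9 7"
    and "mat_adjoint V * V = 1\<^sub>m 7"
    and "{V *\<^sub>v x | x. x \<in> carrier_vec 7} = orth_compl 9 (span2 phi3_plus ket01)"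
  shows "(\<forall>d n M. M \<in> P_set d d id n n \<longrightarrow> mtrace M \<le> real d)
     \<and> F_c 6 6 id = 6
     \<and> ereal (20/3) \<le> F_c_min V 7 3 3
     \<and> ereal (20/3) > F_c 6 6 id"
proof -
  have "ereal (\<Sum>m<3 * 3. (cmod (N7_code m $ m))\<^sup>2) \<le> F_c_min V 7 3 3"
    by (rule sum_product_basis_le_F_c_min)
      (use assms in \<open>simp_all add: N7_code_mem_range N7_code_norm\<close>)
  then have "ereal 7 \<le> F_c_min V 7 3 3" by (simp add: N7_code_fidelity)
  moreover have "F_c 6 6 id = 6" using F_c_id[of 6] by simp
  ultimately show ?thesis
    using mtrace_le_of_mem_P_set_id order.trans[of "ereal (20/3)" "ereal 7"] by auto
qed

end
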